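(* Let $A\in\mathbb{R}^{m\times n}$ with $n>m$, and let $A=U_A\Sigma_AV_A^T$ be its economy SVD, $V_A\in\mathbb{R}^{n\times m}$ with orthonormal columns. Let $\lambda>0$. Let $X\in\mathbb{R}^{n\times s}$ with $n>s>m$ be a matrix such that, for some $0<\epsilon<1$, $$1-\epsilon<\sigma_{\min}(X^TV_A)\le\sigma_{\max}(X^TV_A)<1+\epsilon .$$ Suppose $R\in\mathbb{R}^{m\times m}$ is an upper triangular matrix such that $R^TR=AXX^TA^T+\lambda I_m$. Then $$\kappa_2(R^{-T}D)\le\frac{1+\epsilon}{1-\epsilon},\qquad\text{where } D=\begin{bmatrix}A & \sqrt{\lambda}I_m\end{bmatrix}\in\mathbb{R}^{m\times(n+m)}.$$
   Context: $\sigma_{\min},\sigma_{\max}$ denote the smallest and largest singular values (of the $s\times m$ matrix $X^TV_A$, among its $m$ singular values), and $\kappa_2(M)=\sigma_{\max}(M)/\sigma_{\min}(M)$ is the spectral condition number of a full-row-rank matrix $M$ (ratio of largest to smallest of its $m$ singular values). Note $R$ is invertible since $R^TR$ is positive definite. *)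

theory Defs
  imports "HOL-Analysis.Analysis"
begin

definition eigenvalues_of :: "real^'n^'n \<Rightarrow> real set" where
  "eigenvalues_of M = {l. \<exists>v. v \<noteq> 0 \<and> M *v v = l *\<^sub>R v}"

text \<open>The min(p,q) singular values of a p x q real matrix (as a set):
  square roots of the eigenvalues of the smaller Gram matrix.\<close>
definition singular_values :: "real^'c^'r \<Rightarrow> real set" where
  "singular_values M =
     (if CARD('c) \<le> CARD('r) then sqrt ` eigenvalues_of (transpose M ** M)
      else sqrt ` eigenvalues_of (M ** transpose M))"

definition sigma_min :: "real^'c^'r \<Rightarrow> real" where
  "sigma_min M = Min (singular_values M)"

definition sigma_max :: "real^'c^'r \<Rightarrow> real" where
  "sigma_max M = Max (singular_values M)"

definition kappa2 :: "real^'c^'r \<Rightarrow> real" where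
  "kappa2 M = sigma_max M / sigma_min M"

definition diagonal_mat :: "real^'n^'n \<Rightarrow> bool" where
  "diagonal_mat S \<longleftrightarrow> (\<forall>i j. i \<noteq> j \<longrightarrow> S $ i $ j = 0)"

definition upper_triangular :: "((real, 'k::{finite,linorder}) vec, 'k) vec \<Rightarrow> bool" where
  "upper_triangular R \<longleftrightarrow> (\<forall>i j. j < i \<longrightarrow> R $ i $ j = 0)"

text \<open>The block matrix [A, sqrt(lam) I_m] of size m x (n+m).\<close>
definition aug_mat :: "real^'n^'m \<Rightarrow> real \<Rightarrow> real^('n + 'm)^'m" where
  "aug_mat A lam = (\<chi> i j. case j of Inl k \<Rightarrow> A $ i $ k
                                   | Inr k \<Rightarrow> (if k = i then sqrt lam else 0))"

end

theory Submission
  imports Defs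
begin

text \<open>Put \<open>M = R\<^sup>-\<^sup>T D\<close> and, for a vector \<open>v\<close>, \<open>y = R\<^sup>-\<^sup>1 v\<close> and
  \<open>z = (U S)\<^sup>T y\<close>, so that \<open>A\<^sup>T y = V z\<close>. From \<open>R\<^sup>T R = A X X\<^sup>T A\<^sup>T + \<lambda> I\<close> and
  \<open>D D\<^sup>T = A A\<^sup>T + \<lambda> I\<close> one gets
  \<open>\<parallel>v\<parallel>\<^sup>2 = \<parallel>X\<^sup>T V z\<parallel>\<^sup>2 + \<lambda> \<parallel>y\<parallel>\<^sup>2\<close> and \<open>\<parallel>M\<^sup>T v\<parallel>\<^sup>2 = \<parallel>z\<parallel>\<^sup>2 + \<lambda> \<parallel>y\<parallel>\<^sup>2\<close>.
  The singular value bounds on \<open>X\<^sup>T V\<close> compare the first terms within a factor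
  \<open>(1 \<plusminus> \<epsilon>)\<^sup>2\<close>, so \<open>\<parallel>v\<parallel> / (1 + \<epsilon>) \<le> \<parallel>M\<^sup>T v\<parallel> \<le> \<parallel>v\<parallel> / (1 - \<epsilon>)\<close>, and these
  Rayleigh-quotient bounds confine all singular values of \<open>M\<close>.\<close>

lemma inner_matrix_vector_mult_self:
  fixes A :: "real^'a^'b"
  shows "(A *v x) \<bullet> (A *v x) = x \<bullet> ((transpose A ** A) *v x)"
proof -
  have "x \<bullet> ((transpose A ** A) *v x) = (x v* transpose A) \<bullet> (A *v x)"
    by (simp only: matrix_vector_mul_assoc dot_lmul_matrix)
  then show ?thesis by simp
qed

lemma symmetric_matrix_inner_swap:
  fixes G :: "real^'k^'k"
  assumes "transpose G = G"
  shows "x \<bullet> (G *v y) = y \<bullet> (G *v x)"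
  by (metis assms dot_lmul_matrix inner_commute vector_transpose_matrix)

lemma quadratic_nonneg_imp_linear_coeff_0:
  fixes b c :: real
  assumes "\<And>t. 0 \<le> 2 * t * b + t\<^sup>2 * c"
  shows "b = 0"
proof (rule ccontr)
  assume "b \<noteq> 0"
  define d where "d = \<bar>c\<bar> + 1"
  have d: "d > 0" by (simp add: d_def)
  have "0 \<le> 2 * (- b / d) * b + (- b / d)\<^sup>2 * c" by (rule assms)
  also have "\<dots> = b\<^sup>2 * (c - 2 * d) / d\<^sup>2"
    using d by (simp add: field_simps power2_eq_square)
  finally have "0 \<le> b\<^sup>2 * (c - 2 * d)"
    using d by (simp add: zero_le_divide_iff)
  moreover have "c - 2 * d < 0" unfolding d_def by (simp add: abs_if)
  ultimately show False
    using \<open>b \<noteq> 0\<close> by (simp add: zero_le_mult_iff)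
qed

text \<open>The minimum of the quadratic form on the unit sphere is attained, and its first variation
  in every direction vanishes there, which makes the minimiser an eigenvector.\<close>
lemma symmetric_matrix_min_eigenvalue:
  fixes G :: "real^'k^'k"
  assumes sym: "transpose G = G"
  shows "\<exists>m \<in> eigenvalues_of G. \<forall>x. m * (x \<bullet> x) \<le> x \<bullet> (G *v x)"
proof -
  define f where "f x = x \<bullet> (G *v x)" for x :: "real^'k"
  have "sphere (0::real^'k) 1 \<noteq> {}"
    using norm_axis_1[of undefined] by (metis dist_0_norm mem_sphere empty_iff)
  moreover have "continuous_on (sphere 0 1) f"
    unfolding f_def by (intro continuous_intros)
  ultimately obtain u where u: "u \<in> sphere 0 1" and umin: "\<And>y. y \<in> sphere 0 1 \<Longrightarrow> f u \<le> f y"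
    using continuous_attains_inf[OF compact_sphere] by blast
  define m where "m = f u"
  have uu: "u \<bullet> u = 1" using u by (simp add: dot_square_norm)
  have bound: "m * (x \<bullet> x) \<le> f x" for x
  proof (cases "x = 0")
    case True then show ?thesis by (simp add: f_def)
  next
    case False
    then have n: "norm x > 0" by simp
    have "m \<le> f (x /\<^sub>R norm x)" using n umin m_def by simp
    also have "f (x /\<^sub>R norm x) = f x / (norm x)\<^sup>2"
      by (simp add: f_def matrix_vector_mult_scaleR power2_eq_square divide_inverse mult.commute)
    finally show ?thesis using n by (simp add: pos_le_divide_eq dot_square_norm)
  qed
  have "w \<bullet> (G *v u - m *\<^sub>R u) = 0" for w
  proof (rule quadratic_nonneg_imp_linear_coeff_0)
    fix t
    have "m * ((u + t *\<^sub>R w) \<bullet> (u + t *\<^sub>R w)) \<le> f (u + t *\<^sub>R w)" by (rule bound)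
    moreover have "(u + t *\<^sub>R w) \<bullet> (u + t *\<^sub>R w) = 1 + 2 * t * (u \<bullet> w) + t\<^sup>2 * (w \<bullet> w)"
      using uu by (simp add: inner_add_left inner_add_right inner_commute power2_eq_square)
    moreover have "f (u + t *\<^sub>R w) = m + 2 * t * (w \<bullet> (G *v u)) + t\<^sup>2 * f w"
      using symmetric_matrix_inner_swap[OF sym, of u w]
      by (simp add: f_def m_def matrix_vector_right_distrib matrix_vector_mult_scaleR
          inner_add_left inner_add_right power2_eq_square algebra_simps)
    ultimately show "0 \<le> 2 * t * (w \<bullet> (G *v u - m *\<^sub>R u)) + t\<^sup>2 * (f w - m * (w \<bullet> w))"
      by (simp add: inner_diff_right inner_commute algebra_simps power2_eq_square)
  qed
  then have "G *v u = m *\<^sub>R u"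
    by (metis inner_eq_zero_iff eq_iff_diff_eq_0)
  moreover have "u \<noteq> 0" using u by auto
  ultimately have "m \<in> eigenvalues_of G" unfolding eigenvalues_of_def by blast
  with bound show ?thesis unfolding f_def by blast
qed

lemma symmetric_matrix_max_eigenvalue:
  fixes G :: "real^'k^'k"
  assumes sym: "transpose G = G"
  shows "\<exists>m \<in> eigenvalues_of G. \<forall>x. x \<bullet> (G *v x) \<le> m * (x \<bullet> x)"
proof -
  have neg: "(- G) *v x = - (G *v x)" for x
    by (simp add: matrix_vector_mult_def vec_eq_iff sum_negf)
  have "transpose (- G) = - G"
    using sym transpose_scalar[of "- 1" G] by simp
  then obtain m where m: "m \<in> eigenvalues_of (- G)"
    and b: "\<forall>x. m * (x \<bullet> x) \<le> x \<bullet> ((- G) *v x)"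
    using symmetric_matrix_min_eigenvalue by blast
  from m obtain v where v: "v \<noteq> 0" "- (G *v v) = m *\<^sub>R v"
    unfolding eigenvalues_of_def neg by blast
  then have "G *v v = (- m) *\<^sub>R v"
    by (simp add: minus_equation_iff eq_commute[of "G *v v"])
  with v(1) have "- m \<in> eigenvalues_of G"
    unfolding eigenvalues_of_def by blast
  moreover have "x \<bullet> (G *v x) \<le> - m * (x \<bullet> x)" for x
    using spec[OF b, of x] unfolding neg inner_minus_right by linarith
  ultimately show ?thesis by blast
qed

text \<open>Eigenvectors of distinct eigenvalues are orthogonal, hence linearly independent.\<close>
lemma finite_eigenvalues_symmetric_matrix:
  fixes G :: "real^'k^'k"
  assumes sym: "transpose G = G"
  shows "finite (eigenvalues_of G)"
proof -
  let ?E = "eigenvalues_of G"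
  define f where "f l = (SOME v. v \<noteq> 0 \<and> G *v v = l *\<^sub>R v)" for l
  have fE: "f l \<noteq> 0 \<and> G *v f l = l *\<^sub>R f l" if "l \<in> ?E" for l
    using that unfolding eigenvalues_of_def f_def mem_Collect_eq by (rule someI_ex)
  have "inj_on f ?E"
    by (rule inj_onI) (metis fE scaleR_cancel_right)
  moreover have "pairwise orthogonal (f ` ?E)"
  proof (rule pairwiseI, clarify)
    fix a b assume a: "a \<in> ?E" and b: "b \<in> ?E" and ab: "f a \<noteq> f b"
    have "a * (f b \<bullet> f a) = f b \<bullet> (G *v f a)" using fE[OF a] by simp
    also have "\<dots> = f a \<bullet> (G *v f b)" by (rule symmetric_matrix_inner_swap[OF sym])
    also have "\<dots> = b * (f a \<bullet> f b)" using fE[OF b] by simp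
    finally show "orthogonal (f a) (f b)"
      using ab unfolding orthogonal_def by (metis inner_commute mult_cancel_right)
  qed
  moreover have "0 \<notin> f ` ?E" using fE by force
  ultimately show ?thesis
    by (metis finite_imageD independent_imp_finite pairwise_orthogonal_independent)
qed

lemma gram_eigenvalue_nonneg:
  fixes N :: "real^'a^'b"
  assumes "l \<in> eigenvalues_of (transpose N ** N)"
  shows "0 \<le> l"
proof -
  obtain v where v: "v \<noteq> 0" "(transpose N ** N) *v v = l *\<^sub>R v"
    using assms unfolding eigenvalues_of_def by blast
  then have "l * (v \<bullet> v) = (N *v v) \<bullet> (N *v v)"
    by (simp add: inner_matrix_vector_mult_self)
  then show ?thesis
    using v(1) by (metis inner_ge_zero inner_gt_zero_iff zero_le_mult_iff not_less)
qed

lemma norm_gram_eigenvector: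
  fixes N :: "real^'a^'b"
  assumes "(transpose N ** N) *v v = l *\<^sub>R v"
  shows "norm (N *v v) = sqrt l * norm v"
proof (cases "v = 0")
  case False
  then have "l \<in> eigenvalues_of (transpose N ** N)"
    using assms unfolding eigenvalues_of_def by blast
  then have "0 \<le> l" by (rule gram_eigenvalue_nonneg)
  have "(norm (N *v v))\<^sup>2 = l * (norm v)\<^sup>2"
    using assms by (simp add: inner_matrix_vector_mult_self power2_norm_eq_inner)
  also have "\<dots> = (sqrt l * norm v)\<^sup>2"
    using \<open>0 \<le> l\<close> by (simp add: power_mult_distrib)
  finally show ?thesis
    using \<open>0 \<le> l\<close> by (simp add: power2_eq_iff_nonneg)
qed simp

lemma sigma_min_mult_norm_le:
  fixes C :: "real^'c^'r"
  assumes "CARD('c) \<le> CARD('r)"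
  shows "sigma_min C * norm z \<le> norm (C *v z)"
proof -
  let ?G = "transpose C ** C"
  have sym: "transpose ?G = ?G" by (simp add: matrix_transpose_mul)
  obtain l where l: "l \<in> eigenvalues_of ?G" "\<forall>x. l * (x \<bullet> x) \<le> x \<bullet> (?G *v x)"
    using symmetric_matrix_min_eigenvalue[OF sym] by blast
  have "sigma_min C \<le> sqrt l"
    unfolding sigma_min_def singular_values_def
    using assms l(1) finite_eigenvalues_symmetric_matrix[OF sym] by simp
  then have "sigma_min C * norm z \<le> sqrt l * norm z" by (simp add: mult_right_mono)
  also have "\<dots> \<le> norm (C *v z)"
  proof (rule power2_le_imp_le)
    have "0 \<le> l" using l(1) by (rule gram_eigenvalue_nonneg)
    then show "(sqrt l * norm z)\<^sup>2 \<le> (norm (C *v z))\<^sup>2"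
      using spec[OF l(2), of z]
      by (simp add: power_mult_distrib power2_norm_eq_inner inner_matrix_vector_mult_self)
  qed simp
  finally show ?thesis .
qed

lemma norm_le_sigma_max_mult:
  fixes C :: "real^'c^'r"
  assumes "CARD('c) \<le> CARD('r)"
  shows "norm (C *v z) \<le> sigma_max C * norm z"
proof -
  let ?G = "transpose C ** C"
  have sym: "transpose ?G = ?G" by (simp add: matrix_transpose_mul)
  obtain l where l: "l \<in> eigenvalues_of ?G" "\<forall>x. x \<bullet> (?G *v x) \<le> l * (x \<bullet> x)"
    using symmetric_matrix_max_eigenvalue[OF sym] by blast
  have "0 \<le> l" using l(1) by (rule gram_eigenvalue_nonneg)
  have "norm (C *v z) \<le> sqrt l * norm z"
  proof (rule power2_le_imp_le)
    show "(norm (C *v z))\<^sup>2 \<le> (sqrt l * norm z)\<^sup>2"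
      using spec[OF l(2), of z] \<open>0 \<le> l\<close>
      by (simp add: power_mult_distrib power2_norm_eq_inner inner_matrix_vector_mult_self)
  qed (use \<open>0 \<le> l\<close> in simp)
  also have "sqrt l \<le> sigma_max C"
    unfolding sigma_max_def singular_values_def
    using assms l(1) finite_eigenvalues_symmetric_matrix[OF sym] by simp
  then have "sqrt l * norm z \<le> sigma_max C * norm z" by (simp add: mult_right_mono)
  finally show ?thesis .
qed

lemma kappa2_le_if_norm_transpose_bounds:
  fixes M :: "real^'c^'r"
  assumes "CARD('r) < CARD('c)" "0 < a"
    and lower: "\<And>v. a * norm v \<le> norm (transpose M *v v)"
    and upper: "\<And>v. norm (transpose M *v v) \<le> b * norm v"
  shows "kappa2 M \<le> b / a"
proof -
  let ?P = "transpose (transpose M) ** transpose M"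
  have sym: "transpose ?P = ?P" by (simp add: matrix_transpose_mul)
  let ?S = "sqrt ` eigenvalues_of ?P"
  have sv: "singular_values M = ?S"
    using assms(1) by (simp add: singular_values_def)
  have bounds: "a \<le> s \<and> s \<le> b" if "s \<in> ?S" for s
  proof -
    obtain l v where "s = sqrt l" "v \<noteq> 0" "?P *v v = l *\<^sub>R v"
      using \<open>s \<in> ?S\<close> unfolding eigenvalues_of_def by blast
    then have "norm (transpose M *v v) = s * norm v" by (simp only: norm_gram_eigenvector)
    then show ?thesis
      using lower[of v] upper[of v] \<open>v \<noteq> 0\<close> by simp
  qed
  have "finite ?S" using finite_eigenvalues_symmetric_matrix[OF sym] by simp
  moreover have "?S \<noteq> {}" using symmetric_matrix_min_eigenvalue[OF sym] by blast
  ultimately have "Max ?S \<le> b" "a \<le> Min ?S" "a \<le> b"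
    using bounds Max_in Min_in by (blast, blast, force)
  then show ?thesis
    unfolding kappa2_def sigma_max_def sigma_min_def sv
    using \<open>0 < a\<close> by (intro frac_le) auto
qed

lemma inner_transpose_aug_mat:
  fixes A :: "real^'n^'m"
  assumes "0 \<le> lam"
  shows "(transpose (aug_mat A lam) *v y) \<bullet> (transpose (aug_mat A lam) *v y)
    = (transpose A *v y) \<bullet> (transpose A *v y) + lam * (y \<bullet> y)"
proof -
  let ?x = "transpose (aug_mat A lam) *v y"
  have "?x $ Inl k = (transpose A *v y) $ k" for k
    by (simp add: aug_mat_def matrix_vector_mult_def transpose_def)
  moreover have "?x $ Inr k = sqrt lam * y $ k" for k
  proof -
    have "?x $ Inr k = (\<Sum>j\<in>UNIV. (if k = j then sqrt lam else 0) * y $ j)"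
      by (simp add: aug_mat_def matrix_vector_mult_def transpose_def)
    also have "\<dots> = (\<Sum>j\<in>UNIV. if j = k then sqrt lam * y $ k else 0)"
      by (rule sum.cong) auto
    finally show ?thesis by simp
  qed
  ultimately have
      "\<And>k. ?x $ Inl k * ?x $ Inl k = (transpose A *v y) $ k * (transpose A *v y) $ k"
      "\<And>k. ?x $ Inr k * ?x $ Inr k = lam * (y $ k * y $ k)"
    using assms by (simp_all add: ac_simps)
  then have "(\<Sum>i\<in>UNIV <+> UNIV. ?x $ i * ?x $ i)
      = (transpose A *v y) \<bullet> (transpose A *v y) + lam * (y \<bullet> y)"
    by (simp only: sum.Plus[OF finite finite] comp_def) (simp add: inner_vec_def sum_distrib_left)
  then show ?thesis by (simp add: inner_vec_def UNIV_Plus_UNIV)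
qed

lemma matrix_inv_mult:
  fixes A :: "'a::semiring_1^'n^'m"
  assumes "invertible A"
  shows "A ** matrix_inv A = mat 1" "matrix_inv A ** A = mat 1"
  using someI_ex[OF assms[unfolded invertible_def]] unfolding matrix_inv_def by blast+

lemma invertible_if_inner_bounded_below:
  fixes R :: "real^'n^'n"
  assumes "0 < c" "\<And>y. c * (y \<bullet> y) \<le> (R *v y) \<bullet> (R *v y)"
  shows "invertible R"
proof -
  have "y = 0" if "R *v y = 0" for y
  proof (rule ccontr)
    assume "y \<noteq> 0"
    then have "0 < c * (y \<bullet> y)" using \<open>0 < c\<close> by simp
    with assms(2)[of y] that show False by simp
  qed
  then show ?thesis
    by (simp add: invertible_left_inverse matrix_left_invertible_ker)
qed

lemma sqrt_shifted_square_bounds: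
  fixes lo hi w c r :: real
  assumes "0 < lo" "lo \<le> 1" "1 \<le> hi" "0 \<le> w" "0 \<le> r" "lo * w \<le> c" "c \<le> hi * w"
  shows "1 / hi * sqrt (c\<^sup>2 + r) \<le> sqrt (w\<^sup>2 + r)" "sqrt (w\<^sup>2 + r) \<le> 1 / lo * sqrt (c\<^sup>2 + r)"
proof -
  have "0 \<le> lo * w" using assms by simp
  then have "c\<^sup>2 \<le> (hi * w)\<^sup>2" "(lo * w)\<^sup>2 \<le> c\<^sup>2"
    using assms(6,7) by (simp_all add: power_mono)
  moreover have "r \<le> hi\<^sup>2 * r" "lo\<^sup>2 * r \<le> r"
    using assms by (simp_all add: mult_le_cancel_right1 mult_left_le_one_le one_le_power power_le_one)
  ultimately have "sqrt (c\<^sup>2 + r) \<le> sqrt (hi\<^sup>2 * (w\<^sup>2 + r))"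
    "sqrt (lo\<^sup>2 * (w\<^sup>2 + r)) \<le> sqrt (c\<^sup>2 + r)"
    by (simp_all add: power_mult_distrib distrib_left)
  then have "sqrt (c\<^sup>2 + r) \<le> hi * sqrt (w\<^sup>2 + r)" "lo * sqrt (w\<^sup>2 + r) \<le> sqrt (c\<^sup>2 + r)"
    using assms by (simp_all add: real_sqrt_mult)
  then show "1 / hi * sqrt (c\<^sup>2 + r) \<le> sqrt (w\<^sup>2 + r)" "sqrt (w\<^sup>2 + r) \<le> 1 / lo * sqrt (c\<^sup>2 + r)"
    using assms by (simp_all add: field_simps)
qed

lemma inner_gram_shift:
  fixes R :: "real^'n^'n" and B :: "real^'n^'k"
  assumes "transpose R ** R = transpose B ** B + lam *\<^sub>R mat 1"
  shows "(R *v y) \<bullet> (R *v y) = (B *v y) \<bullet> (B *v y) + lam * (y \<bullet> y)"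
  using assms
  by (simp add: inner_matrix_vector_mult_self matrix_vector_mult_add_rdistrib inner_add_right
      flip: scaleR_matrix_vector_assoc)

lemma norm_transpose_preconditioned_aug_mat_bounds:
  fixes A :: "real^'n^'m" and W :: "real^'k^'m" and V :: "real^'k^'n"
    and X :: "real^'s^'n" and R :: "real^'m^'m"
  assumes A: "A = W ** transpose V" and V: "transpose V ** V = mat 1"
    and R: "transpose R ** R = A ** X ** transpose X ** transpose A + lam *\<^sub>R mat 1"
    and "0 < lam" "0 < lo" "lo \<le> 1" "1 \<le> hi"
    and lower: "\<And>z. lo * norm z \<le> norm ((transpose X ** V) *v z)"
    and upper: "\<And>z. norm ((transpose X ** V) *v z) \<le> hi * norm z"
  defines "M \<equiv> matrix_inv (transpose R) ** aug_mat A lam"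
  shows "1 / hi * norm v \<le> norm (transpose M *v v)" "norm (transpose M *v v) \<le> 1 / lo * norm v"
proof -
  let ?C = "transpose X ** V"
  define y where "y = transpose (matrix_inv (transpose R)) *v v"
  define z where "z = transpose W *v y"
  have AT: "transpose A = V ** transpose W"
    using A by (simp add: matrix_transpose_mul)
  have "transpose (transpose X ** transpose A) ** (transpose X ** transpose A)
      = A ** X ** transpose X ** transpose A"
    by (simp add: matrix_transpose_mul matrix_mul_assoc)
  then have "(R *v x) \<bullet> (R *v x)
      = ((transpose X ** transpose A) *v x) \<bullet> ((transpose X ** transpose A) *v x) + lam * (x \<bullet> x)" for x
    using R inner_gram_shift by metis
  then have R_inner: "(R *v x) \<bullet> (R *v x)
      = (?C *v (transpose W *v x)) \<bullet> (?C *v (transpose W *v x)) + lam * (x \<bullet> x)" for x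
    by (simp add: AT matrix_mul_assoc flip: matrix_vector_mul_assoc)
  then have "invertible R"
    using \<open>0 < lam\<close> by (intro invertible_if_inner_bounded_below) auto
  then have "R ** transpose (matrix_inv (transpose R)) = mat 1"
    by (metis matrix_inv_mult(2) matrix_transpose_mul transpose_invertible transpose_mat
        transpose_transpose)
  then have "R *v y = v"
    by (simp only: y_def matrix_vector_mul_assoc matrix_vector_mul_lid)
  then have "norm v = sqrt ((norm (?C *v z))\<^sup>2 + lam * (y \<bullet> y))"
    using R_inner[of y] by (simp add: z_def norm_eq_sqrt_inner[of v] power2_norm_eq_inner)
  moreover have "norm (transpose M *v v) = sqrt ((norm z)\<^sup>2 + lam * (y \<bullet> y))"
  proof -
    have "transpose M *v v = transpose (aug_mat A lam) *v y"
      by (simp only: M_def y_def matrix_transpose_mul matrix_vector_mul_assoc)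
    moreover have "transpose A *v y = V *v z"
      by (simp only: z_def AT matrix_vector_mul_assoc)
    moreover have "(V *v z) \<bullet> (V *v z) = z \<bullet> z"
      using V by (simp add: inner_matrix_vector_mult_self)
    ultimately show ?thesis
      using inner_transpose_aug_mat[of lam A y] \<open>0 < lam\<close>
      by (simp add: norm_eq_sqrt_inner power2_norm_eq_inner)
  qed
  ultimately show "1 / hi * norm v \<le> norm (transpose M *v v)"
    "norm (transpose M *v v) \<le> 1 / lo * norm v"
    using sqrt_shifted_square_bounds[where w = "norm z" and c = "norm (?C *v z)"
        and r = "lam * (y \<bullet> y)"] lower[of z] upper[of z] assms(4-7) by simp_all
qed

theorem lemma2p2:
  fixes A :: "((real, 'n::finite) vec, 'm::{finite,linorder}) vec"
    and U :: "((real, 'm) vec, 'm) vec" and S :: "((real, 'm) vec, 'm) vec"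
    and V :: "((real, 'm) vec, 'n) vec"
    and X :: "real^'s^'n" and R :: "((real, 'm) vec, 'm) vec"
    and lam eps :: real
  assumes dims: "CARD('n) > CARD('m)" "CARD('n) > CARD('s)" "CARD('s) > CARD('m)"
    and svd: "A = U ** S ** transpose V"
      "transpose U ** U = mat 1" "U ** transpose U = mat 1"
      "diagonal_mat S" "\<forall>i. S $ i $ i \<ge> 0"
      "transpose V ** V = mat 1"
    and lam: "lam > 0"
    and eps: "0 < eps" "eps < 1"
    and X: "1 - eps < sigma_min (transpose X ** V)" "sigma_max (transpose X ** V) < 1 + eps"
    and R: "upper_triangular R"
      "transpose R ** R = A ** X ** transpose X ** transpose A + lam *\<^sub>R mat 1"
  shows "kappa2 (matrix_inv (transpose R) ** aug_mat A lam) \<le> (1 + eps) / (1 - eps)"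
proof -
  let ?C = "transpose X ** V"
  let ?M = "matrix_inv (transpose R) ** aug_mat A lam"
  have lower: "(1 - eps) * norm z \<le> norm (?C *v z)" for z
    using X(1) dims(3) sigma_min_mult_norm_le[of ?C z]
    by (meson less_imp_le mult_right_mono norm_ge_zero order_trans)
  have upper: "norm (?C *v z) \<le> (1 + eps) * norm z" for z
    using X(2) dims(3) norm_le_sigma_max_mult[of ?C z]
    by (meson less_imp_le mult_right_mono norm_ge_zero order_trans)
  have A: "A = (U ** S) ** transpose V"
    using svd(1) by simp
  have "0 < 1 - eps" "1 - eps \<le> 1" "1 \<le> 1 + eps"
    using eps by auto
  note bounds = norm_transpose_preconditioned_aug_mat_bounds[OF A svd(6) R(2) lam this lower upper]
  have "CARD('m) < CARD('n + 'm)"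
    by (simp add: card_Plus flip: UNIV_Plus_UNIV)
  then have "kappa2 ?M \<le> (1 / (1 - eps)) / (1 / (1 + eps))"
    using eps bounds by (intro kappa2_le_if_norm_transpose_bounds) auto
  also have "\<dots> = (1 + eps) / (1 - eps)"
    using eps by simp
  finally show ?thesis .
qed

end
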